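(* Let $A$ be a finite skew brace such that $\Theta(A)$ has exactly one vertex. Then $(A,+)$ is abelian.
   Context: A skew brace is a triple $(A,+,\circ)$ where $(A,+)$ and $(A,\circ)$ are groups with $a\circ(b+c)=a\circ b-a+a\circ c$. $\lambda_a(b)=-a+a\circ b$; $\theta_{(a,b)}(c)=a+\lambda_b(c)-a$ defines an action of $(A,+)\rtimes_\lambda(A,\circ)$ on $(A,+)$ by automorphisms. $\Theta(A)$ is the graph whose vertices are the $\theta$-orbits of size $>1$, two distinct vertices $L_1,L_2$ adjacent iff $\gcd(|L_1|,|L_2|)\ne1$. *)

theory Defs
  imports "HOL-Algebra.Group"
begin

text \<open>A skew brace (A,+,o) is given by two HOL-Algebra groups Add (the group (A,+),
written multiplicatively in the library) and Circ (the group (A,o)) on the same carrier.\<close>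

definition skew_brace :: "('a, 'b) monoid_scheme \<Rightarrow> ('a, 'c) monoid_scheme \<Rightarrow> bool" where
  "skew_brace Add Circ \<longleftrightarrow> group Add \<and> group Circ \<and> carrier Add = carrier Circ \<and>
     (\<forall>a\<in>carrier Add. \<forall>b\<in>carrier Add. \<forall>c\<in>carrier Add.
        a \<otimes>\<^bsub>Circ\<^esub> (b \<otimes>\<^bsub>Add\<^esub> c)
          = (a \<otimes>\<^bsub>Circ\<^esub> b) \<otimes>\<^bsub>Add\<^esub> inv\<^bsub>Add\<^esub> a \<otimes>\<^bsub>Add\<^esub> (a \<otimes>\<^bsub>Circ\<^esub> c))"

definition brace_lambda :: "('a, 'b) monoid_scheme \<Rightarrow> ('a, 'c) monoid_scheme \<Rightarrow> 'a \<Rightarrow> 'a \<Rightarrow> 'a" where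
  "brace_lambda Add Circ a b = inv\<^bsub>Add\<^esub> a \<otimes>\<^bsub>Add\<^esub> (a \<otimes>\<^bsub>Circ\<^esub> b)"

definition brace_theta :: "('a, 'b) monoid_scheme \<Rightarrow> ('a, 'c) monoid_scheme \<Rightarrow> 'a \<Rightarrow> 'a \<Rightarrow> 'a \<Rightarrow> 'a" where
  "brace_theta Add Circ a b c = a \<otimes>\<^bsub>Add\<^esub> brace_lambda Add Circ b c \<otimes>\<^bsub>Add\<^esub> inv\<^bsub>Add\<^esub> a"

definition theta_orbit :: "('a, 'b) monoid_scheme \<Rightarrow> ('a, 'c) monoid_scheme \<Rightarrow> 'a \<Rightarrow> 'a set" where
  "theta_orbit Add Circ c = {brace_theta Add Circ a b c | a b. a \<in> carrier Add \<and> b \<in> carrier Add}"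

definition Theta_vertices :: "('a, 'b) monoid_scheme \<Rightarrow> ('a, 'c) monoid_scheme \<Rightarrow> 'a set set" where
  "Theta_vertices Add Circ =
     {L. (\<exists>c\<in>carrier Add. L = theta_orbit Add Circ c) \<and> card L > 1}"

end

theory Submission
  imports Defs "HOL-Algebra.Group_Action" "HOL-Algebra.Sylow" "HOL-Algebra.Multiplicative_Group"
begin

text \<open>
  The maps \<open>\<theta>\<^sub>g\<close> are automorphisms of \<open>(A,+)\<close>, so the common fixed points form a
  subgroup \<open>F\<close>, which is central because \<open>\<theta>\<close> at \<open>(a, 1)\<close> is conjugation by \<open>a\<close>, and
  elements of one orbit have the same order. If \<open>\<Theta>(A)\<close> has a single vertex, \<open>A - F\<close> is a
  single orbit: its elements share an order \<open>n\<close>, and by orbit-stabilizer \<open>|A - F|\<close> divides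
  \<open>|A|\<^sup>2\<close>. For \<open>x \<notin> F\<close> and a prime \<open>s\<close> dividing \<open>n\<close> we get \<open>x\<^sup>s \<in> F\<close>, so by Bezout
  only one prime \<open>r\<close> divides \<open>n\<close>; by Cauchy's theorem and centrality of \<open>F\<close>, \<open>|A|\<close> is a
  power of \<open>r\<close>. Writing \<open>|A| = k|F|\<close>, the divisor \<open>(k - 1)|F|\<close> of \<open>|A|\<^sup>2\<close> forces \<open>k - 1\<close>
  to be a power of \<open>r\<close> prime to \<open>r\<close>, so \<open>k \<le> 2\<close>, and a group with a central subgroup of
  index at most two is abelian.
\<close>

section \<open>Finite groups\<close>

lemma (in group) exists_ord_eq_prime:
  assumes fin: "finite (carrier G)" and p: "prime p" and dvd: "p dvd order G"
  shows "\<exists>z\<in>carrier G. ord z = p"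
proof -
  have "order G = p ^ 1 * (order G div p)" using dvd by simp
  from sylow_thm[OF p is_group this fin] obtain H where H: "subgroup H G" "card H = p"
    by auto
  then have "\<not> H \<subseteq> {\<one>}" using card_mono[of "{\<one>}" H] prime_ge_2_nat[OF p] by auto
  then obtain h where h: "h \<in> H" "h \<noteq> \<one>" by blast
  have hc: "h \<in> carrier G" using H h subgroup.subset by blast
  interpret K: group "G\<lparr>carrier := H\<rparr>" using H subgroup.subgroup_is_group is_group by blast
  have "h [^]\<^bsub>G\<lparr>carrier := H\<rparr>\<^esub> order (G\<lparr>carrier := H\<rparr>) = \<one>"
    using K.pow_order_eq_1 h by simp
  then have "h [^] p = \<one>" using H nat_pow_consistent[of h p H] by (simp add: order_def)
  then have "ord h dvd p" using hc pow_eq_id by blast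
  then have "ord h = 1 \<or> ord h = p" using p prime_nat_iff by blast
  then show ?thesis using hc h ord_eq_1 by blast
qed

lemma (in group_hom) ord_hom_inj:
  assumes inj: "inj_on h (carrier G)" and x: "x \<in> carrier G"
  shows "H.ord (h x) = G.ord x"
proof -
  have "h x [^]\<^bsub>H\<^esub> k = \<one>\<^bsub>H\<^esub> \<longleftrightarrow> x [^] k = \<one>" for k :: nat
  proof -
    have "h x [^]\<^bsub>H\<^esub> k = \<one>\<^bsub>H\<^esub> \<longleftrightarrow> h (x [^] k) = h \<one>"
      using x by (simp add: hom_nat_pow)
    also have "\<dots> \<longleftrightarrow> x [^] k = \<one>" using x by (simp add: inj_on_eq_iff[OF inj] del: hom_one)
    finally show ?thesis .
  qed
  then show ?thesis
    using x by (simp add: H.ord_unique G.pow_eq_id)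
qed

lemma group_actionI:
  fixes G (structure)
  assumes G: "group G"
    and closed: "\<And>g c. g \<in> carrier G \<Longrightarrow> c \<in> E \<Longrightarrow> f g c \<in> E"
    and one: "\<And>c. c \<in> E \<Longrightarrow> f \<one> c = c"
    and comp: "\<And>g h c. g \<in> carrier G \<Longrightarrow> h \<in> carrier G \<Longrightarrow> c \<in> E \<Longrightarrow> f g (f h c) = f (g \<otimes> h) c"
  shows "group_action G E (\<lambda>g. restrict (f g) E)"
proof -
  interpret group G by (rule G)
  have inverse: "f (inv g) (f g c) = c" "f g (f (inv g) c) = c" if "g \<in> carrier G" "c \<in> E" for g c
    using that by (simp_all add: comp one)
  have Bij: "restrict (f g) E \<in> Bij E" if g: "g \<in> carrier G" for g
  proof -
    have "bij_betw (f g) E E"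
      using g closed inverse by (intro bij_betw_byWitness[where f' = "f (inv g)"]) auto
    then show ?thesis unfolding Bij_def by (simp add: bij_betw_restrict_eq)
  qed
  show ?thesis
    unfolding group_action_def group_hom_def group_hom_axioms_def
  proof (intro conjI G group_BijGroup homI)
    show "restrict (f g) E \<in> carrier (BijGroup E)" if "g \<in> carrier G" for g
      using Bij that by (simp add: BijGroup_def)
    show "restrict (f (g \<otimes> h)) E = restrict (f g) E \<otimes>\<^bsub>BijGroup E\<^esub> restrict (f h) E"
      if "g \<in> carrier G" "h \<in> carrier G" for g h
      using that Bij closed comp by (auto simp: BijGroup_def compose_def)
  qed
qed

lemma (in group) mem_subgroup_if_coprime_pows:
  assumes H: "subgroup H G" and x: "x \<in> carrier G"
    and a: "x [^] (a::nat) \<in> H" and b: "x [^] (b::nat) \<in> H" and "coprime a b"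
  shows "x \<in> H"
proof -
  obtain u v :: int where uv: "u * int a + v * int b = 1"
    using bezout_int[of "int a" "int b"] \<open>coprime a b\<close> by (auto simp: coprime_int_iff gcd_int_def)
  have "x = x [^] (int a * u + int b * v)" using uv x by (simp add: mult.commute)
  also have "\<dots> = (x [^] a) [^] u \<otimes> (x [^] b) [^] v"
    using x by (simp add: int_pow_mult int_pow_pow[symmetric] int_pow_int)
  also have "\<dots> \<in> H"
    using a b H by (simp add: subgroup_int_pow_closed subgroup.m_closed)
  finally show ?thesis .
qed

lemma (in group) mult_subgroup_notin:
  assumes F: "subgroup F G" and c: "c \<in> carrier G" "c \<notin> F" and z: "z \<in> F"
  shows "c \<otimes> z \<notin> F"
proof
  assume "c \<otimes> z \<in> F"
  then have "c \<otimes> z \<otimes> inv z \<in> F" using F z by (simp add: subgroup.m_closed subgroup.m_inv_closed)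
  then show False using c z subgroup.mem_carrier[OF F z] by (simp add: m_assoc)
qed

lemma (in group) comm_group_if_central_subgroup_of_index_le_2:
  assumes fin: "finite (carrier G)" and F: "subgroup F G"
    and central: "\<And>c a. c \<in> F \<Longrightarrow> a \<in> carrier G \<Longrightarrow> a \<otimes> c = c \<otimes> a"
    and card: "card (carrier G - F) \<le> card F"
  shows "comm_group G"
proof (cases "F = carrier G")
  case True
  then show ?thesis using central by (intro group_comm_groupI) auto
next
  case False
  have FG: "F \<subseteq> carrier G" using F subgroup.subset by blast
  then obtain c where c: "c \<in> carrier G" "c \<notin> F" using False by blast
  have image_sub: "(\<otimes>) c ` F \<subseteq> carrier G - F"
    using c FG mult_subgroup_notin[OF F c] by auto
  have "inj_on ((\<otimes>) c) F" using c FG by (intro inj_onI) (metis Units_eq Units_l_cancel subsetD)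
  then have "card ((\<otimes>) c ` F) = card (carrier G - F)"
    using card card_mono[OF _ image_sub] fin by (simp add: card_image)
  then have "(\<otimes>) c ` F = carrier G - F"
    using image_sub fin by (intro card_subset_eq) auto
  then have outside: "\<exists>z\<in>F. x = c \<otimes> z" if "x \<in> carrier G" "x \<notin> F" for x
    using that by auto
  show ?thesis
  proof (rule group_comm_groupI)
    fix x y assume x: "x \<in> carrier G" and y: "y \<in> carrier G"
    show "x \<otimes> y = y \<otimes> x"
    proof (cases "x \<in> F \<or> y \<in> F")
      case True
      then show ?thesis using central x y by auto
    next
      case False
      then obtain z w where z: "z \<in> F" "x = c \<otimes> z" and w: "w \<in> F" "y = c \<otimes> w"
        using outside x y by meson
      have zw: "z \<in> carrier G" "w \<in> carrier G" using z w FG by auto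
      have "x \<otimes> y = c \<otimes> ((c \<otimes> w) \<otimes> z)"
        using central[OF z(1), of "c \<otimes> w"] c zw by (simp add: z w m_assoc)
      also have "\<dots> = c \<otimes> (c \<otimes> (z \<otimes> w))" using central[OF z(1) zw(2)] c zw by (simp add: m_assoc)
      also have "\<dots> = c \<otimes> ((c \<otimes> z) \<otimes> w)" using c zw by (simp add: m_assoc)
      also have "\<dots> = y \<otimes> x"
        using central[OF w(1), of "c \<otimes> z"] c zw by (simp add: z w m_assoc)
      finally show ?thesis .
    qed
  qed
qed

locale uniform_order_complement = group G for G (structure) +
  fixes F :: "'a set" and n :: nat
  assumes finite_carrier: "finite (carrier G)"
    and subgroup_F: "subgroup F G"
    and central: "c \<in> F \<Longrightarrow> a \<in> carrier G \<Longrightarrow> a \<otimes> c = c \<otimes> a"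
    and ord_complement: "x \<in> carrier G - F \<Longrightarrow> ord x = n"
begin

lemma pow_prime_dvd_ord_mem:
  assumes x: "x \<in> carrier G - F" and s: "prime s" "s dvd n"
  shows "x [^] s \<in> F"
proof (rule ccontr)
  assume "x [^] s \<notin> F"
  then have "ord (x [^] s) = n" using x by (intro ord_complement) simp
  moreover have "ord (x [^] s) = n div s"
    using x s ord_pow ord_complement[OF x] prime_gt_0_nat by auto
  moreover have "n div s < n"
    using ord_ge_1[OF finite_carrier, of x] ord_complement[OF x] x prime_gt_1_nat[OF s(1)]
    by (auto intro!: div_less_dividend)
  ultimately show False by simp
qed

lemma prime_dvd_ord_unique:
  assumes c: "c \<in> carrier G - F"
    and p: "prime p" "p dvd n" and q: "prime q" "q dvd n"
  shows "p = q"
proof (rule ccontr)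
  assume "p \<noteq> q"
  then have "coprime p q" using p q primes_coprime by blast
  moreover have "c [^] p \<in> F" "c [^] q \<in> F" using c p q by (simp_all add: pow_prime_dvd_ord_mem)
  ultimately have "c \<in> F" using c mem_subgroup_if_coprime_pows[OF subgroup_F] by blast
  then show False using c by simp
qed

lemma prime_dvd_order_dvd_ord:
  assumes c: "c \<in> carrier G - F" and s: "prime s" "s dvd order G"
  shows "s dvd n"
proof -
  obtain z where z: "z \<in> carrier G" "ord z = s" using exists_ord_eq_prime[OF finite_carrier s] by blast
  show ?thesis
  proof (cases "z \<in> F")
    case True
    then have "c \<otimes> z \<in> carrier G - F" using c z mult_subgroup_notin[OF subgroup_F] by auto
    then have "(c \<otimes> z) [^] n = \<one>" using ord_complement[of "c \<otimes> z"] pow_ord_eq_1[of "c \<otimes> z"] by simp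
    moreover have "(c \<otimes> z) [^] n = c [^] n \<otimes> z [^] n"
      using pow_mult_distrib[OF central[OF True, of c]] c z by blast
    moreover have "c [^] n = \<one>" using c ord_complement[OF c] pow_ord_eq_1[of c] by simp
    ultimately have "z [^] n = \<one>" using z by simp
    then show ?thesis using z by (simp add: pow_eq_id)
  next
    case False
    then show ?thesis using z ord_complement by simp
  qed
qed

lemma card_complement_le_card:
  assumes dvd: "card (carrier G - F) dvd order G ^ 2"
  shows "card (carrier G - F) \<le> card F"
proof (cases "F = carrier G")
  case True
  then show ?thesis by simp
next
  case False
  have FG: "F \<subseteq> carrier G" using subgroup_F subgroup.subset by blast
  then obtain c where c: "c \<in> carrier G - F" using False by blast
  have primes_eq: "p = q" if "prime p" "p dvd order G" "prime q" "q dvd order G" for p q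
    using that prime_dvd_ord_unique[OF c] prime_dvd_order_dvd_ord[OF c] by simp
  define k where "k = card (rcosets F)"
  have order: "order G = k * card F" using lagrange[OF subgroup_F] k_def by simp
  have "card F < order G"
    using FG False finite_carrier by (metis order_def psubset_card_mono psubsetI)
  then have k: "k \<ge> 2"
    using order by (cases k) (auto simp: Suc_le_eq dest: gr0_implies_Suc)
  have complement: "card (carrier G - F) = (k - 1) * card F"
    using FG finite_carrier order card_Diff_subset[of F "carrier G"]
    by (simp add: order_def diff_mult_distrib finite_subset)
  obtain q where q: "prime q" "q dvd k" using prime_factor_nat[of k] k by auto
  have "k - 1 = 1"
  proof (rule ccontr)
    assume "k - 1 \<noteq> 1"
    then obtain p where p: "prime p" "p dvd k - 1" using prime_factor_nat by blast
    then have "p dvd order G ^ 2"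
      using dvd complement by (metis dvd_mult2 dvd_trans)
    moreover have "q dvd order G" using q order by simp
    ultimately have "p = q" using p q primes_eq prime_dvd_power[of p "order G" 2] by simp
    then have "p dvd k - (k - 1)" using p q dvd_diff_nat by blast
    then show False using p k by simp
  qed
  then show ?thesis using complement by simp
qed

lemma comm_group_if_card_complement_dvd:
  assumes "card (carrier G - F) dvd order G ^ 2"
  shows "comm_group G"
  using comm_group_if_central_subgroup_of_index_le_2[OF finite_carrier subgroup_F central]
    card_complement_le_card[OF assms] by blast

end

section \<open>The \<open>\<theta>\<close>-action of a skew brace\<close>

locale skew_brace_struct =
  fixes A :: "('a, 'b) monoid_scheme" (structure) and C :: "('a, 'c) monoid_scheme"
  assumes skew_brace: "skew_brace A C"
begin

sublocale group A using skew_brace unfolding skew_brace_def by auto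
sublocale C: group C using skew_brace unfolding skew_brace_def by auto

lemma carrier_C: "carrier C = carrier A"
  using skew_brace unfolding skew_brace_def by auto

lemma brace_distrib:
  "\<lbrakk>a \<in> carrier A; b \<in> carrier A; c \<in> carrier A\<rbrakk> \<Longrightarrow>
     a \<otimes>\<^bsub>C\<^esub> (b \<otimes> c) = (a \<otimes>\<^bsub>C\<^esub> b) \<otimes> inv a \<otimes> (a \<otimes>\<^bsub>C\<^esub> c)"
  using skew_brace unfolding skew_brace_def by auto

lemma circ_closed [simp]: "\<lbrakk>a \<in> carrier A; b \<in> carrier A\<rbrakk> \<Longrightarrow> a \<otimes>\<^bsub>C\<^esub> b \<in> carrier A"
  using C.m_closed carrier_C by auto

lemma circ_one_right: "a \<in> carrier A \<Longrightarrow> a \<otimes>\<^bsub>C\<^esub> \<one> = a"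
proof -
  assume a: "a \<in> carrier A"
  then have "a \<otimes>\<^bsub>C\<^esub> \<one> \<otimes> inv a = \<one>" using brace_distrib[of a \<one> \<one>] by simp
  then show ?thesis using a by (metis inv_equality inv_closed circ_closed one_closed inv_inv)
qed

lemma one_C [simp]: "\<one>\<^bsub>C\<^esub> = \<one>"
  using circ_one_right[of "\<one>\<^bsub>C\<^esub>"] carrier_C by (metis C.l_one C.one_closed one_closed)

abbreviation lam :: "'a \<Rightarrow> 'a \<Rightarrow> 'a" where
  "lam \<equiv> brace_lambda A C"

lemma lam_closed [simp]: "\<lbrakk>a \<in> carrier A; b \<in> carrier A\<rbrakk> \<Longrightarrow> lam a b \<in> carrier A"
  by (simp add: brace_lambda_def)

lemma lam_mult:
  "\<lbrakk>a \<in> carrier A; b \<in> carrier A; c \<in> carrier A\<rbrakk> \<Longrightarrow> lam a (b \<otimes> c) = lam a b \<otimes> lam a c"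
  by (simp add: brace_lambda_def brace_distrib m_assoc)

lemma lam_one [simp]: "a \<in> carrier A \<Longrightarrow> lam a \<one> = \<one>"
  by (simp add: brace_lambda_def circ_one_right)

lemma lam_one_left [simp]: "b \<in> carrier A \<Longrightarrow> lam \<one> b = b"
  using carrier_C by (simp add: brace_lambda_def)

lemma lam_inv: "\<lbrakk>a \<in> carrier A; b \<in> carrier A\<rbrakk> \<Longrightarrow> lam a (inv b) = inv (lam a b)"
  by (metis inv_equality lam_closed lam_mult lam_one inv_closed l_inv)

lemma lam_circ:
  assumes a: "a \<in> carrier A" and b: "b \<in> carrier A" and c: "c \<in> carrier A"
  shows "lam a (lam b c) = lam (a \<otimes>\<^bsub>C\<^esub> b) c"
proof -
  have "lam a (lam b c) = lam a (inv b) \<otimes> lam a (b \<otimes>\<^bsub>C\<^esub> c)"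
    using a b c by (simp add: brace_lambda_def[of _ _ b] lam_mult)
  also have "\<dots> = inv (inv a \<otimes> (a \<otimes>\<^bsub>C\<^esub> b)) \<otimes> (inv a \<otimes> ((a \<otimes>\<^bsub>C\<^esub> b) \<otimes>\<^bsub>C\<^esub> c))"
    using a b c lam_inv[of a b] by (simp add: brace_lambda_def C.m_assoc carrier_C)
  also have "\<dots> = lam (a \<otimes>\<^bsub>C\<^esub> b) c"
    using a b c by (simp add: brace_lambda_def inv_mult_group m_assoc r_inv_ex flip: m_assoc[of a "inv a"])
  finally show ?thesis .
qed

definition lambda_semidirect :: "('a \<times> 'a) monoid" where
  "lambda_semidirect =
     \<lparr>carrier = carrier A \<times> carrier A,
      monoid.mult = (\<lambda>g h. (fst g \<otimes> lam (snd g) (fst h), snd g \<otimes>\<^bsub>C\<^esub> snd h)),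
      one = (\<one>, \<one>)\<rparr>"

lemma lambda_semidirect_simps [simp]:
  "carrier lambda_semidirect = carrier A \<times> carrier A"
  "(a, b) \<otimes>\<^bsub>lambda_semidirect\<^esub> (a', b') = (a \<otimes> lam b a', b \<otimes>\<^bsub>C\<^esub> b')"
  "\<one>\<^bsub>lambda_semidirect\<^esub> = (\<one>, \<one>)"
  by (simp_all add: lambda_semidirect_def)

lemma group_lambda_semidirect: "group lambda_semidirect"
proof (rule groupI)
  fix x y z assume "x \<in> carrier lambda_semidirect" "y \<in> carrier lambda_semidirect"
    "z \<in> carrier lambda_semidirect"
  then obtain a b a' b' a'' b'' where xyz: "x = (a, b)" "y = (a', b')" "z = (a'', b'')"
    and c: "a \<in> carrier A" "b \<in> carrier A" "a' \<in> carrier A" "b' \<in> carrier A"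
      "a'' \<in> carrier A" "b'' \<in> carrier A"
    by auto
  have "lam b (a' \<otimes> lam b' a'') = lam b a' \<otimes> lam (b \<otimes>\<^bsub>C\<^esub> b') a''"
    using c by (simp add: lam_mult lam_circ)
  moreover have "b \<otimes>\<^bsub>C\<^esub> b' \<otimes>\<^bsub>C\<^esub> b'' = b \<otimes>\<^bsub>C\<^esub> (b' \<otimes>\<^bsub>C\<^esub> b'')"
    using c carrier_C by (simp add: C.m_assoc)
  ultimately show "x \<otimes>\<^bsub>lambda_semidirect\<^esub> y \<otimes>\<^bsub>lambda_semidirect\<^esub> z =
      x \<otimes>\<^bsub>lambda_semidirect\<^esub> (y \<otimes>\<^bsub>lambda_semidirect\<^esub> z)"
    using c by (simp add: xyz m_assoc)
next
  fix x assume "x \<in> carrier lambda_semidirect"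
  then obtain a b where x: "x = (a, b)" "a \<in> carrier A" "b \<in> carrier A" by auto
  then show "\<one>\<^bsub>lambda_semidirect\<^esub> \<otimes>\<^bsub>lambda_semidirect\<^esub> x = x"
    using C.l_one carrier_C by fastforce
  define b' where "b' = inv\<^bsub>C\<^esub> b"
  have b': "b' \<in> carrier A" "b' \<otimes>\<^bsub>C\<^esub> b = \<one>" using x C.inv_closed C.l_inv carrier_C by (auto simp: b'_def)
  then have "(inv (lam b' a), b') \<otimes>\<^bsub>lambda_semidirect\<^esub> x = \<one>\<^bsub>lambda_semidirect\<^esub>"
    using x by simp
  moreover have "(inv (lam b' a), b') \<in> carrier lambda_semidirect" using x b' by simp
  ultimately show "\<exists>y\<in>carrier lambda_semidirect. y \<otimes>\<^bsub>lambda_semidirect\<^esub> x = \<one>\<^bsub>lambda_semidirect\<^esub>"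
    by blast
qed (auto simp: lambda_semidirect_def)

abbreviation theta :: "'a \<times> 'a \<Rightarrow> 'a \<Rightarrow> 'a" where
  "theta g \<equiv> brace_theta A C (fst g) (snd g)"

definition theta_action :: "'a \<times> 'a \<Rightarrow> 'a \<Rightarrow> 'a" where
  "theta_action g = restrict (theta g) (carrier A)"

lemma theta_closed [simp]:
  "\<lbrakk>g \<in> carrier lambda_semidirect; c \<in> carrier A\<rbrakk> \<Longrightarrow> theta g c \<in> carrier A"
  by (auto simp: brace_theta_def)

lemma theta_mult:
  assumes "g \<in> carrier lambda_semidirect" and x: "x \<in> carrier A" and y: "y \<in> carrier A"
  shows "theta g (x \<otimes> y) = theta g x \<otimes> theta g y"
proof -
  obtain a b where "g = (a, b)" "a \<in> carrier A" "b \<in> carrier A" using assms(1) by auto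
  then show ?thesis
    using x y by (simp add: brace_theta_def lam_mult m_assoc flip: m_assoc[of "inv a" a])
qed

lemma theta_comp:
  assumes "g \<in> carrier lambda_semidirect" "h \<in> carrier lambda_semidirect" and c: "c \<in> carrier A"
  shows "theta g (theta h c) = theta (g \<otimes>\<^bsub>lambda_semidirect\<^esub> h) c"
proof -
  obtain a b a' b' where gh: "g = (a, b)" "h = (a', b')"
    and ab: "a \<in> carrier A" "b \<in> carrier A" "a' \<in> carrier A" "b' \<in> carrier A"
    using assms by auto
  have "lam b (a' \<otimes> lam b' c \<otimes> inv a') = lam b a' \<otimes> lam (b \<otimes>\<^bsub>C\<^esub> b') c \<otimes> inv (lam b a')"
    using ab c by (simp add: lam_mult lam_circ lam_inv)
  then show ?thesis using ab c by (simp add: gh brace_theta_def m_assoc inv_mult_group)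
qed

lemma theta_one: "c \<in> carrier A \<Longrightarrow> theta \<one>\<^bsub>lambda_semidirect\<^esub> c = c"
  by (simp add: brace_theta_def)

lemma group_action_theta: "group_action lambda_semidirect (carrier A) theta_action"
  unfolding theta_action_def
  using group_lambda_semidirect theta_closed theta_one theta_comp by (rule group_actionI)

lemma orbit_theta_action:
  "c \<in> carrier A \<Longrightarrow> orbit lambda_semidirect theta_action c = theta_orbit A C c"
  by (auto simp: orbit_def theta_orbit_def theta_action_def)

lemma ord_theta:
  assumes g: "g \<in> carrier lambda_semidirect" and x: "x \<in> carrier A"
  shows "ord (theta g x) = ord x"
proof -
  interpret group_action lambda_semidirect "carrier A" theta_action by (rule group_action_theta)
  have "theta_action g \<in> hom A A"
    using g by (intro homI) (simp_all add: theta_action_def theta_mult)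
  then interpret group_hom A A "theta_action g" by (simp add: group_hom_def group_hom_axioms_def is_group)
  show ?thesis using ord_hom_inj[OF inj_prop[OF g] x] x by (simp add: theta_action_def)
qed

lemma theta_orbit_subset: "c \<in> carrier A \<Longrightarrow> theta_orbit A C c \<subseteq> carrier A"
  by (auto simp: theta_orbit_def brace_theta_def)

lemma theta_mem_theta_orbit:
  "g \<in> carrier lambda_semidirect \<Longrightarrow> theta g c \<in> theta_orbit A C c"
  by (cases g) (auto simp: theta_orbit_def)

lemma theta_orbit_refl: "c \<in> carrier A \<Longrightarrow> c \<in> theta_orbit A C c"
  using theta_mem_theta_orbit[of "\<one>\<^bsub>lambda_semidirect\<^esub>" c] theta_one[of c] by simp

lemma ord_theta_orbit:
  assumes c: "c \<in> carrier A" and y: "y \<in> theta_orbit A C c"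
  shows "ord y = ord c"
proof -
  obtain g where "g \<in> carrier lambda_semidirect" "y = theta g c"
    using y by (auto simp: theta_orbit_def)
  then show ?thesis using ord_theta c by simp
qed

lemma card_theta_orbit_dvd:
  assumes "c \<in> carrier A"
  shows "card (theta_orbit A C c) dvd order A ^ 2"
proof -
  interpret group_action lambda_semidirect "carrier A" theta_action by (rule group_action_theta)
  have "card (theta_orbit A C c) * card (stabilizer lambda_semidirect theta_action c)
      = order lambda_semidirect"
    using orbit_stabilizer_theorem[OF assms] orbit_theta_action[OF assms] by simp
  also have "\<dots> = order A ^ 2" by (simp add: order_def card_cartesian_product power2_eq_square)
  finally show ?thesis by (metis dvd_triv_left)
qed

definition theta_fixed :: "'a set" where
  "theta_fixed = {c \<in> carrier A. \<forall>g\<in>carrier lambda_semidirect. theta g c = c}"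

lemma subgroup_theta_fixed: "subgroup theta_fixed A"
proof (rule subgroupI)
  have inv: "theta g (inv c) = inv (theta g c)"
    if g: "g \<in> carrier lambda_semidirect" and c: "c \<in> carrier A" for g c
  proof -
    have "theta g (inv c) \<otimes> theta g c = theta g \<one>" using g c by (simp flip: theta_mult)
    also have "\<dots> = \<one>" using g by (auto simp: brace_theta_def)
    finally show ?thesis using g c by (simp add: inv_equality)
  qed
  show "theta_fixed \<subseteq> carrier A" "theta_fixed \<noteq> {}"
    by (auto simp: theta_fixed_def brace_theta_def)
  show "\<And>c. c \<in> theta_fixed \<Longrightarrow> inv c \<in> theta_fixed"
    unfolding theta_fixed_def using inv by (simp del: lambda_semidirect_simps)
  show "\<And>c d. c \<in> theta_fixed \<Longrightarrow> d \<in> theta_fixed \<Longrightarrow> c \<otimes> d \<in> theta_fixed"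
    unfolding theta_fixed_def using theta_mult by (simp del: lambda_semidirect_simps)
qed

lemma theta_fixed_central:
  assumes c: "c \<in> theta_fixed" and a: "a \<in> carrier A"
  shows "a \<otimes> c = c \<otimes> a"
proof -
  have cA: "c \<in> carrier A" using c by (simp add: theta_fixed_def)
  have "theta (a, \<one>) c = c" using c a by (simp add: theta_fixed_def)
  then have "a \<otimes> c \<otimes> inv a = c" using cA by (simp add: brace_theta_def)
  then have "a \<otimes> c \<otimes> inv a \<otimes> a = c \<otimes> a" by simp
  then show ?thesis using a cA by (simp add: m_assoc)
qed

lemma theta_orbit_theta_fixed: "c \<in> theta_fixed \<Longrightarrow> theta_orbit A C c = {c}"
  by (force simp: theta_fixed_def theta_orbit_def brace_theta_def)

lemma card_theta_orbit_gt_1: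
  assumes fin: "finite (carrier A)" and c: "c \<in> carrier A - theta_fixed"
  shows "1 < card (theta_orbit A C c)"
proof -
  obtain g where g: "g \<in> carrier lambda_semidirect" "theta g c \<noteq> c"
    using c by (auto simp: theta_fixed_def)
  have "{c, theta g c} \<subseteq> theta_orbit A C c"
    using c g theta_orbit_refl theta_mem_theta_orbit by blast
  moreover have "finite (theta_orbit A C c)"
    using theta_orbit_subset c fin finite_subset by blast
  ultimately have "card {c, theta g c} \<le> card (theta_orbit A C c)" by (simp add: card_mono)
  then show ?thesis using g by simp
qed

lemma Theta_vertices_eq:
  assumes fin: "finite (carrier A)"
  shows "Theta_vertices A C = theta_orbit A C ` (carrier A - theta_fixed)"
proof -
  have "1 < card (theta_orbit A C c) \<longleftrightarrow> c \<notin> theta_fixed" if "c \<in> carrier A" for c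
    using that card_theta_orbit_gt_1[OF fin] theta_orbit_theta_fixed by auto
  then show ?thesis unfolding Theta_vertices_def by blast
qed

lemma theta_orbit_eq_complement:
  assumes fin: "finite (carrier A)" and one_vertex: "card (Theta_vertices A C) = 1"
    and c: "c \<in> carrier A - theta_fixed"
  shows "theta_orbit A C c = carrier A - theta_fixed"
proof
  interpret group_action lambda_semidirect "carrier A" theta_action by (rule group_action_theta)
  have "Theta_vertices A C = {theta_orbit A C c}"
    using one_vertex c Theta_vertices_eq[OF fin] by (metis card_1_singletonE image_eqI singletonD)
  then have "theta_orbit A C y = theta_orbit A C c" if "y \<in> carrier A - theta_fixed" for y
    using that Theta_vertices_eq[OF fin] by blast
  then show "carrier A - theta_fixed \<subseteq> theta_orbit A C c"
    using theta_orbit_refl by blast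
  show "theta_orbit A C c \<subseteq> carrier A - theta_fixed"
  proof
    fix y assume y: "y \<in> theta_orbit A C c"
    then have yA: "y \<in> carrier A" using theta_orbit_subset c by blast
    have "y \<notin> theta_fixed"
    proof
      assume "y \<in> theta_fixed"
      moreover have "c \<in> theta_orbit A C y"
        using orbit_sym[of c y] y c yA by (simp add: orbit_theta_action)
      ultimately show False using c theta_orbit_theta_fixed by auto
    qed
    then show "y \<in> carrier A - theta_fixed" using yA by simp
  qed
qed

end

theorem mainTheorem19:
  fixes Add :: "('a, 'b) monoid_scheme" and Circ :: "('a, 'c) monoid_scheme"
  assumes "skew_brace Add Circ"
    and "finite (carrier Add)"
    and "card (Theta_vertices Add Circ) = 1"
  shows "comm_group Add"
proof -
  interpret skew_brace_struct Add Circ by unfold_locales (rule assms(1))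
  obtain c where c: "c \<in> carrier Add - theta_fixed"
    using assms(2,3) Theta_vertices_eq by (metis card_1_singletonE ex_in_conv image_empty insert_not_empty)
  have orbit: "theta_orbit Add Circ c = carrier Add - theta_fixed"
    by (rule theta_orbit_eq_complement[OF assms(2,3) c])
  have "ord x = ord c" if "x \<in> carrier Add - theta_fixed" for x
    using that c orbit ord_theta_orbit by blast
  then interpret uniform_order_complement Add theta_fixed "ord c"
    using assms(2) subgroup_theta_fixed theta_fixed_central
    by (simp add: uniform_order_complement_def uniform_order_complement_axioms_def is_group)
  show ?thesis
    using card_theta_orbit_dvd[of c] c orbit by (intro comm_group_if_card_complement_dvd) simp
qed

end
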